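(* Let $h:\mathbf{C}\to\mathbf{C}$ be a transitive homeomorphism of the Cantor space and let $x\in\mathbf{C}$ be a point whose orbit under $h$ is dense in $\mathbf{C}$. Then there exist $\Phi=(\varphi^L,\varphi^U)$ such that $\mathbf{F}_\Phi$ is a Lelek fence and a homeomorphism $\hat h$ of $\mathbf{F}_\Phi$ such that (a) $h$ is the canonical factor of $\hat h$, i.e. $\hat h(y,t)=(h(y),s)$ for some $s$, for all $(y,t)\in\mathbf{F}_\Phi$; and (b) $(x,\varphi^U(x))$ is a transitive point of $\hat h$ (its orbit under $\hat h$ is dense in $\mathbf{F}_\Phi$).
   Context: For $\Phi=(\varphi^L,\varphi^U)$ with $\varphi^L,\varphi^U:\mathbf{C}\to[0,1]$, $\varphi^L$ lower semicontinuous, $\varphi^U$ upper semicontinuous, $\varphi^L\le\varphi^U$, the fence is $\mathbf{F}_\Phi=\{(x,t)\in\mathbf{C}\times[0,1]:\varphi^L(x)\le t\le\varphi^U(x)\}$. $\mathbf{F}_\Phi$ is a Lelek fence if $\varphi^L\equiv0$, $\varphi^U$ is positive on a dense subset of $\mathbf{C}$, and the graph $\{(x,\varphi^U(x)):x\in\mathbf{C}\}$ is dense in $\mathbf{F}_\Phi$. *)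

theory Defs
  imports "HOL-Analysis.Analysis"
begin

text \<open>The Cantor space, realised as the middle-thirds Cantor set in the reals
  (with the subspace topology).\<close>
definition cantor_set :: "real set" where
  "cantor_set = {x. \<exists>d::nat \<Rightarrow> nat. (\<forall>n. d n \<in> {0, 2}) \<and>
                     x = (\<Sum>n. real (d n) / 3 ^ (n + 1))}"

definition lsc_on :: "real set \<Rightarrow> (real \<Rightarrow> real) \<Rightarrow> bool" where
  "lsc_on S f \<longleftrightarrow> (\<forall>a. openin (top_of_set S) {x \<in> S. a < f x})"

definition usc_on :: "real set \<Rightarrow> (real \<Rightarrow> real) \<Rightarrow> bool" where
  "usc_on S f \<longleftrightarrow> (\<forall>a. openin (top_of_set S) {x \<in> S. f x < a})"

definition admissible_pair :: "(real \<Rightarrow> real) \<Rightarrow> (real \<Rightarrow> real) \<Rightarrow> bool" where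
  "admissible_pair phiL phiU \<longleftrightarrow>
     (\<forall>x\<in>cantor_set. phiL x \<in> {0..1} \<and> phiU x \<in> {0..1} \<and> phiL x \<le> phiU x) \<and>
     lsc_on cantor_set phiL \<and> usc_on cantor_set phiU"

definition fence :: "(real \<Rightarrow> real) \<Rightarrow> (real \<Rightarrow> real) \<Rightarrow> (real \<times> real) set" where
  "fence phiL phiU = {(x, t). x \<in> cantor_set \<and> t \<in> {0..1} \<and> phiL x \<le> t \<and> t \<le> phiU x}"

definition lelek_fence :: "(real \<Rightarrow> real) \<Rightarrow> (real \<Rightarrow> real) \<Rightarrow> bool" where
  "lelek_fence phiL phiU \<longleftrightarrow>
     (\<forall>x\<in>cantor_set. phiL x = 0) \<and>
     (\<exists>D \<subseteq> cantor_set. cantor_set \<subseteq> closure D \<and> (\<forall>x\<in>D. 0 < phiU x)) \<and>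
     fence phiL phiU \<subseteq> closure ((\<lambda>x. (x, phiU x)) ` cantor_set)"

definition orbit :: "('a \<Rightarrow> 'a) \<Rightarrow> 'a \<Rightarrow> 'a set" where
  "orbit f x = range (\<lambda>n. (f ^^ n) x)"

definition top_transitive :: "'a::topological_space set \<Rightarrow> ('a \<Rightarrow> 'a) \<Rightarrow> bool" where
  "top_transitive S f \<longleftrightarrow>
     (\<forall>U V. openin (top_of_set S) U \<and> openin (top_of_set S) V \<and> U \<noteq> {} \<and> V \<noteq> {} \<longrightarrow>
        (\<exists>n>0. (f ^^ n) ` U \<inter> V \<noteq> {}))"

end

theory Submission
  imports Defs
begin

(* The fence is the orbit closure of a skew product skew (z, t) = (h z, exp (- f z) * t) over h.
  The orbit of (x, 1) consists of the points (h^n x, exp (- s_n)) with Birkhoff sums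
  s_n = f x + ... + f (h^(n-1) x).  If all s_n are nonnegative and, along returns of h^n x to x,
  the s_n approximate every D >= 0, then the orbit closure K contains {x} \<times> [0,1].  Since skew
  commutes with the fibrewise scalings (z, t) |-> (z, c t), 0 <= c <= 1, K is then the region
  under the upper semicontinuous function phiU z = max {t. (z, t) \<in> K}; it is mapped onto
  itself by skew, and the orbit of (x, 1) runs along the graph of phiU.
  Such an f is a uniformly convergent sum of coboundaries c_k (W_k \<circ> h - W_k), where W_k z
  counts (smoothly) the visits of g z, ..., g^m z to a finite block of the orbit of x: at the
  k-th return time the Birkhoff sum is shifted by the k-th rational target value, while the
  sums at earlier times are left unchanged. *)

section \<open>Bump functions and orbit closures\<close>

definition bump :: "'a::metric_space set \<Rightarrow> real \<Rightarrow> 'a \<Rightarrow> real" where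
  "bump P \<delta> z = max 0 (1 - infdist z P / \<delta>)"

lemma bump_nonneg: "0 \<le> bump P \<delta> z"
  by (simp add: bump_def)

lemma bump_le_one: "0 < \<delta> \<Longrightarrow> bump P \<delta> z \<le> 1"
  by (simp add: bump_def infdist_nonneg)

lemma continuous_on_bump: "continuous_on A (bump P \<delta>)"
  unfolding bump_def divide_inverse by (intro continuous_intros)

lemma bump_eq_indicator:
  assumes "P \<noteq> {}" "P \<subseteq> Q" "0 < \<delta>" "\<And>q q'. q \<in> Q \<Longrightarrow> q' \<in> Q \<Longrightarrow> q \<noteq> q' \<Longrightarrow> \<delta> \<le> dist q q'" "q \<in> Q"
  shows "bump P \<delta> q = indicator P q"
proof (cases "q \<in> P")
  case True
  then show ?thesis using assms by (simp add: bump_def)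
next
  case False
  have "\<delta> \<le> infdist q P"
    unfolding infdist_notempty[OF \<open>P \<noteq> {}\<close>]
    using False assms by (intro cINF_greatest) auto
  then show ?thesis using False \<open>0 < \<delta>\<close> by (simp add: bump_def)
qed

lemma finite_imp_uniformly_discrete:
  fixes Q :: "'a::metric_space set"
  assumes "finite Q"
  obtains \<delta> where "0 < \<delta>" "\<And>q q'. q \<in> Q \<Longrightarrow> q' \<in> Q \<Longrightarrow> q \<noteq> q' \<Longrightarrow> \<delta> \<le> dist q q'"
  using assms
proof (induction Q arbitrary: thesis rule: finite_induct)
  case empty then show ?case by (metis empty_iff zero_less_one)
next
  case (insert a Q)
  obtain \<delta> where \<delta>: "0 < \<delta>" "\<And>q q'. q \<in> Q \<Longrightarrow> q' \<in> Q \<Longrightarrow> q \<noteq> q' \<Longrightarrow> \<delta> \<le> dist q q'"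
    using insert.IH by blast
  obtain \<delta>a where \<delta>a: "0 < \<delta>a" "\<forall>q\<in>Q. q \<noteq> a \<longrightarrow> \<delta>a \<le> dist a q"
    using finite_set_avoid[OF insert.hyps(1)] by blast
  show ?case
    using \<delta> \<delta>a by (intro insert.prems[of "min \<delta> \<delta>a"]) (auto simp: dist_commute min_le_iff_disj)
qed

lemma orbit_eq_insert: "orbit F p = insert p (F ` orbit F p)"
proof -
  have "(F ^^ n) p \<in> insert p (F ` orbit F p)" for n
    by (cases n) (auto simp: orbit_def)
  moreover have "F ((F ^^ n) p) \<in> orbit F p" for n
    using rangeI[of "\<lambda>n. (F ^^ n) p" "Suc n"] by (simp add: orbit_def)
  moreover have "p \<in> orbit F p"
    using rangeI[of "\<lambda>n. (F ^^ n) p" 0] by (simp add: orbit_def)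
  ultimately show ?thesis
    by (auto simp: orbit_def)
qed

lemma LIMSEQ_if_dist_less_inverse_Suc:
  assumes "\<And>n. dist (X n) L < inverse (real (Suc n))"
  shows "X \<longlonglongrightarrow> L"
proof -
  have "norm (dist (X n) L) \<le> inverse (real (Suc n))" for n
    using assms[of n] by simp
  then show ?thesis
    by (intro tendsto_dist_iff[THEN iffD2, OF Lim_null_comparison[OF _ LIMSEQ_inverse_real_of_nat]]
        always_eventually allI)
qed

lemma continuous_on_image_closure_Int:
  assumes "continuous_on X F" "A \<subseteq> X"
  shows "F ` (closure A \<inter> X) \<subseteq> closure (F ` A)"
proof -
  have "F ` (top_of_set X closure_of A) \<subseteq> euclidean closure_of (F ` A)"
    using assms(1)
    by (intro continuous_map_image_closure_subset) (simp add: continuous_map_iff_continuous)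
  then show ?thesis
    using assms(2) by (simp add: closure_of_subtopology Int_absorb2 Int_commute)
qed

lemma homeomorphism_closure_invariant:
  assumes homeo: "homeomorphism X X F G" and "A \<subseteq> X" "F ` A \<subseteq> A" "A \<subseteq> closure (F ` A)"
  shows "F ` (closure A \<inter> X) = closure A \<inter> X"
proof
  have F: "continuous_on X F" "F ` X = X" and G: "continuous_on X G" "G ` X = X"
    and GF: "\<And>p. p \<in> X \<Longrightarrow> G (F p) = p" and FG: "\<And>p. p \<in> X \<Longrightarrow> F (G p) = p"
    using homeo by (auto simp: homeomorphism_def)
  show "F ` (closure A \<inter> X) \<subseteq> closure A \<inter> X"
    using continuous_on_image_closure_Int[OF F(1) \<open>A \<subseteq> X\<close>] closure_mono[OF \<open>F ` A \<subseteq> A\<close>] F(2)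
    by blast
  have "F ` A \<subseteq> X"
    using \<open>A \<subseteq> X\<close> F(2) by blast
  then have "G ` (closure (F ` A) \<inter> X) \<subseteq> closure (G ` F ` A)"
    by (rule continuous_on_image_closure_Int[OF G(1)])
  moreover have "G ` F ` A = A"
    using GF \<open>A \<subseteq> X\<close> by (force simp: image_image)
  moreover have "closure (F ` A) = closure A"
    using assms(3,4) by (metis closure_closure closure_mono subset_antisym)
  ultimately have "G ` (closure A \<inter> X) \<subseteq> closure A"
    by simp
  then have G_closure: "G ` (closure A \<inter> X) \<subseteq> closure A \<inter> X"
    using G(2) by blast
  show "closure A \<inter> X \<subseteq> F ` (closure A \<inter> X)"
  proof
    fix p assume "p \<in> closure A \<inter> X"
    then have "G p \<in> closure A \<inter> X" "p = F (G p)"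
      using G_closure FG by auto
    then show "p \<in> F ` (closure A \<inter> X)"
      by blast
  qed
qed

section \<open>Orbits of a transitive homeomorphism\<close>

locale transitive_homeomorphism =
  fixes S :: "'a::metric_space set" and h g :: "'a \<Rightarrow> 'a" and x :: 'a
  assumes homeo: "homeomorphism S S h g"
    and transitive: "top_transitive S h"
    and infinite_space: "infinite S"
    and x_in: "x \<in> S"
    and dense_orbit: "S \<subseteq> closure (orbit h x)"
begin

definition fwd :: "nat \<Rightarrow> 'a" where "fwd n = (h ^^ n) x"
definition bwd :: "nat \<Rightarrow> 'a" where "bwd n = (g ^^ n) x"

lemma h_in: "z \<in> S \<Longrightarrow> h z \<in> S"
  and g_in: "z \<in> S \<Longrightarrow> g z \<in> S"
  and g_h: "z \<in> S \<Longrightarrow> g (h z) = z"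
  and h_g: "z \<in> S \<Longrightarrow> h (g z) = z"
  and continuous_on_h: "continuous_on S h"
  and continuous_on_g: "continuous_on S g"
  using homeo unfolding homeomorphism_def by blast+

lemma funpow_g_in: "z \<in> S \<Longrightarrow> (g ^^ t) z \<in> S"
  by (induction t) (auto intro: g_in)

lemma continuous_on_funpow_g: "continuous_on S (g ^^ t)"
proof (induction t)
  case (Suc t)
  then show ?case
    using continuous_on_compose2[OF continuous_on_g Suc] funpow_g_in by auto
qed (simp add: continuous_on_id)

lemma fwd_in: "fwd n \<in> S"
  unfolding fwd_def by (induction n) (auto intro: h_in x_in)

lemma fwd_0 [simp]: "fwd 0 = x"
  by (simp add: fwd_def)

lemma fwd_Suc: "fwd (Suc n) = h (fwd n)"
  by (simp add: fwd_def)

lemma fwd_add: "fwd (m + n) = (h ^^ m) (fwd n)"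
  by (simp add: fwd_def funpow_add)

lemma range_fwd: "range fwd = orbit h x"
  by (simp add: orbit_def fwd_def)

lemma funpow_g_fwd: "(g ^^ t) (fwd n) = (if t \<le> n then fwd (n - t) else bwd (t - n))"
proof (induction t)
  case (Suc t)
  consider "Suc t \<le> n" | "t = n" | "n < t" by linarith
  then show ?case
  proof cases
    case 1
    then have "fwd (n - t) = h (fwd (n - Suc t))"
      by (metis Suc_diff_Suc Suc_le_lessD fwd_Suc)
    then show ?thesis using Suc 1 by (simp add: g_h fwd_in)
  qed (use Suc in \<open>auto simp: bwd_def Suc_diff_le\<close>)
qed simp

lemma funpow_h_bwd: "(h ^^ n) (bwd n) = x"
proof (induction n)
  case (Suc n)
  have "bwd n \<in> S"
    unfolding bwd_def by (rule funpow_g_in[OF x_in])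
  have "(h ^^ Suc n) (bwd (Suc n)) = (h ^^ n) (h (g (bwd n)))"
    by (simp add: bwd_def funpow_swap1)
  with Suc \<open>bwd n \<in> S\<close> show ?case
    by (simp add: h_g)
qed (simp add: bwd_def)

lemma fwd_not_periodic:
  assumes "0 < p"
  shows "fwd p \<noteq> x"
proof
  assume "fwd p = x"
  then have "fwd (q * p + r) = fwd r" for q r
  proof (induction q)
    case (Suc q)
    have "fwd (Suc q * p + r) = (h ^^ (q * p + r)) (fwd p)"
      by (simp add: fwd_add[symmetric] algebra_simps)
    also have "\<dots> = fwd (q * p + r)"
      using fwd_add[of "q * p + r" 0] Suc.prems by simp
    finally show ?case
      using Suc by simp
  qed simp
  then have "range fwd \<subseteq> fwd ` {..<p}"
    using assms by (metis div_mult_mod_eq image_eqI image_subsetI lessThan_iff mod_less_divisor)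
  then have "finite (orbit h x)"
    using range_fwd by (metis finite_imageI finite_lessThan finite_subset)
  then have "S \<subseteq> orbit h x"
    using dense_orbit by (simp add: finite_imp_closed)
  then show False
    using infinite_space \<open>finite (orbit h x)\<close> finite_subset by blast
qed

lemma inj_fwd: "inj fwd"
proof -
  have "fwd i \<noteq> fwd j" if "i < j" for i j
  proof
    assume "fwd i = fwd j"
    have "fwd (j - i) = (g ^^ i) (fwd j)"
      using that by (simp add: funpow_g_fwd)
    also have "\<dots> = (g ^^ i) (fwd i)"
      using \<open>fwd i = fwd j\<close> by simp
    also have "\<dots> = x"
      by (simp add: funpow_g_fwd)
    finally show False
      using fwd_not_periodic[of "j - i"] that by simp
  qed
  then show ?thesis
    by (metis injI linorder_neqE_nat)
qed

lemma bwd_neq_fwd: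
  assumes "0 < s"
  shows "bwd s \<noteq> fwd i"
proof
  assume "bwd s = fwd i"
  then have "fwd (s + i) = x"
    by (metis fwd_add funpow_h_bwd)
  then show False
    using fwd_not_periodic assms by simp
qed

(* Transitivity is needed only here: a dense orbit alone may start at an isolated point. *)
lemma x_islimpt: "x islimpt S"
proof (rule ccontr)
  assume "\<not> x islimpt S"
  then obtain T where "x \<in> T" "open T" "\<And>y. y \<in> S \<Longrightarrow> y \<in> T \<Longrightarrow> y = x"
    unfolding islimpt_def by blast
  then have "S \<inter> T = {x}"
    using x_in by blast
  then have "openin (top_of_set S) {x}"
    using openin_open_Int[OF \<open>open T\<close>, of S] by simp
  then obtain n where "0 < n" "(h ^^ n) ` {x} \<inter> {x} \<noteq> {}"
    using transitive[unfolded top_transitive_def, rule_format, of "{x}" "{x}"] by blast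
  then show False
    using fwd_not_periodic[of n] by (auto simp: fwd_def)
qed

lemma fwd_recurrent:
  assumes "0 < e"
  obtains m where "N < m" "dist (fwd m) x < e"
proof -
  have "x islimpt range fwd"
    using islimpt_subset[OF x_islimpt dense_orbit] range_fwd by (simp add: limpt_of_closure)
  then have "infinite (range fwd \<inter> ball x e)"
    using assms islimpt_eq_infinite_ball by blast
  then have "infinite (range fwd \<inter> ball x e - fwd ` {..N})"
    by (simp add: Diff_infinite_finite)
  then obtain m where "fwd m \<in> ball x e" "fwd m \<notin> fwd ` {..N}"
    using infinite_imp_nonempty by blast
  moreover from this have "N < m"
    by (meson atMost_iff image_eqI not_le)
  ultimately show ?thesis
    using that by (simp add: dist_commute)
qed

end

section \<open>Construction of the cocycle\<close>

definition target :: "nat \<Rightarrow> real" where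
  "target k = real (fst (prod_decode k)) / real (Suc (snd (prod_decode k)))"

definition tol :: "nat \<Rightarrow> real" where
  "tol k = 1 / real (Suc (snd (prod_decode k)))"

lemma target_nonneg: "0 \<le> target k"
  by (simp add: target_def)

lemma tol_pos: "0 < tol k"
  by (simp add: tol_def)

lemma target_approx:
  assumes "0 \<le> D" "0 < \<epsilon>"
  obtains k where "\<bar>target k - D\<bar> \<le> tol k" "tol k < \<epsilon>"
proof -
  obtain j :: nat where j: "1 / real (Suc j) < \<epsilon>"
    using assms(2) by (metis nat_approx_posE)
  define i where "i = nat \<lfloor>D * real (Suc j)\<rfloor>"
  have "real i \<le> D * real (Suc j)" "D * real (Suc j) < real i + 1"
    using assms(1) by (simp_all add: i_def of_nat_nat real_of_int_floor_add_one_gt)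
  then have "\<bar>real i - D * real (Suc j)\<bar> / real (Suc j) \<le> 1 / real (Suc j)"
    by (intro divide_right_mono) auto
  moreover have "real i / real (Suc j) - D = (real i - D * real (Suc j)) / real (Suc j)"
    by (simp add: field_simps)
  ultimately have "\<bar>real i / real (Suc j) - D\<bar> \<le> 1 / real (Suc j)"
    by simp
  then show ?thesis
    using that[of "prod_encode (i, j)"] j by (simp add: target_def tol_def)
qed

datatype 'a stage = Stage (weight: real) (marked: "'a set") (radius: real) (return_time: nat)

context transitive_homeomorphism
begin

definition visits :: "'a stage \<Rightarrow> 'a \<Rightarrow> real" where
  "visits d z = (\<Sum>t\<in>{1..return_time d}. bump (marked d) (radius d) ((g ^^ t) z))"

lemma visits_nonneg: "0 \<le> visits d z"
  unfolding visits_def by (intro sum_nonneg bump_nonneg)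

lemma continuous_on_visits: "continuous_on S (visits d)"
  unfolding visits_def
  by (intro continuous_on_sum continuous_on_compose2[OF continuous_on_bump continuous_on_funpow_g])
    auto

lemma visits_h_diff:
  assumes "z \<in> S"
  shows "visits d (h z) - visits d z =
    bump (marked d) (radius d) z - bump (marked d) (radius d) ((g ^^ return_time d) z)"
proof -
  let ?b = "\<lambda>t. bump (marked d) (radius d) ((g ^^ t) z)"
  have "visits d (h z) = (\<Sum>t<return_time d. ?b t)"
  proof -
    have "(g ^^ t) (h z) = (g ^^ (t - 1)) z" if "1 \<le> t" for t
      using that by (cases t) (simp_all add: funpow_swap1 g_h assms)
    then show ?thesis
      unfolding visits_def
      by (intro sum.reindex_bij_witness[where i = Suc and j = "\<lambda>t. t - 1"]) auto
  qed
  moreover have "visits d z = (\<Sum>t<return_time d. ?b (Suc t))"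
    unfolding visits_def
    by (intro sum.reindex_bij_witness[where i = Suc and j = "\<lambda>t. t - 1"]) auto
  ultimately show ?thesis
    using sum_lessThan_telescope'[of ?b "return_time d"] by (simp add: sum_subtractf)
qed

lemma abs_visits_h_diff_le:
  assumes "z \<in> S" "0 < radius d"
  shows "\<bar>visits d (h z) - visits d z\<bar> \<le> 1"
  using visits_h_diff[OF assms(1)] bump_nonneg bump_le_one[OF assms(2)]
  by (smt (verit, best))

lemma visits_marked_block:
  assumes "M + r < m" "0 < r" "0 < \<delta>"
    and sep: "\<And>q q'. q \<in> Q \<Longrightarrow> q' \<in> Q \<Longrightarrow> q \<noteq> q' \<Longrightarrow> \<delta> \<le> dist q q'"
    and Q: "Q = fwd ` {..<m} \<union> bwd ` {1..m}"
  shows "\<And>i. i \<le> M \<Longrightarrow> visits (Stage c (fwd ` {M<..M+r}) \<delta> m) (fwd i) = 0"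
    and "visits (Stage c (fwd ` {M<..M+r}) \<delta> m) (fwd m) = real r"
proof -
  let ?P = "fwd ` {M<..M+r}"
  have fwd_in_P: "fwd i \<in> ?P \<longleftrightarrow> i \<in> {M<..M+r}" for i
    using inj_fwd by (auto simp: inj_eq)
  have P_ne: "?P \<noteq> {}" and P_sub: "?P \<subseteq> Q"
    using assms(1,2) by (auto simp: Q)
  have bump_Q: "bump ?P \<delta> q = indicator ?P q" if "q \<in> Q" for q
    by (rule bump_eq_indicator[OF P_ne P_sub \<open>0 < \<delta>\<close> sep that])
  have bump_orbit: "bump ?P \<delta> ((g ^^ t) (fwd i)) = indicator {M<..M+r} (i - t)"
    if "t \<in> {1..m}" "i \<le> m" "t \<le> i" for t i
    using that by (simp add: funpow_g_fwd bump_Q Q fwd_in_P indicator_def)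
  have bump_backward: "bump ?P \<delta> ((g ^^ t) (fwd i)) = 0"
    if "t \<in> {1..m}" "i < t" for t i
  proof -
    have "t - i \<in> {1..m}"
      using that by auto
    then have "bwd (t - i) \<in> Q"
      by (simp add: Q)
    moreover have "bwd (t - i) \<notin> ?P"
      using bwd_neq_fwd[of "t - i"] that by auto
    ultimately show ?thesis
      using that by (simp add: funpow_g_fwd bump_Q)
  qed
  show "visits (Stage c ?P \<delta> m) (fwd i) = 0" if "i \<le> M" for i
  proof -
    have "bump ?P \<delta> ((g ^^ t) (fwd i)) = 0" if "t \<in> {1..m}" for t
      using bump_orbit[of t i] bump_backward[of t i] that \<open>i \<le> M\<close> assms(1)
      by (cases "t \<le> i") auto
    then show ?thesis
      by (simp add: visits_def)
  qed
  have "visits (Stage c ?P \<delta> m) (fwd m) = (\<Sum>t\<in>{1..m}. indicator {M<..M+r} (m - t))"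
    unfolding visits_def by (intro sum.cong) (auto simp: bump_orbit)
  also have "\<dots> = (\<Sum>i<m. indicator {M<..M+r} i)"
    by (rule sum.reindex_bij_witness[where i = "\<lambda>i. m - i" and j = "\<lambda>t. m - t"]) auto
  also have "\<dots> = real (card ({..<m} \<inter> {M<..M+r}))"
    by (simp add: indicator_def Int_def)
  also have "{..<m} \<inter> {M<..M+r} = {M<..M+r}"
    using assms(1) by auto
  finally show "visits (Stage c ?P \<delta> m) (fwd m) = real r"
    by simp
qed

(* D: the shift of the Birkhoff sum at the return time; b: bound on the weight;
  M: earlier times whose Birkhoff sums must stay unchanged; F: the earlier stages' contribution. *)
definition good_stage :: "real \<Rightarrow> real \<Rightarrow> real \<Rightarrow> nat \<Rightarrow> ('a \<Rightarrow> real) \<Rightarrow> 'a stage \<Rightarrow> bool" where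
  "good_stage D b \<epsilon> M F d \<longleftrightarrow>
     0 \<le> weight d \<and> weight d \<le> b \<and> 0 < radius d \<and> M < return_time d \<and>
     dist (fwd (return_time d)) x < \<epsilon> \<and> \<bar>F (fwd (return_time d))\<bar> < \<epsilon> \<and>
     weight d * visits d (fwd (return_time d)) = D \<and> (\<forall>i\<le>M. visits d (fwd i) = 0)"

lemma good_stage_exists:
  assumes "continuous_on S F" "F x = 0" "0 \<le> D" "0 < b" "0 < \<epsilon>"
  shows "\<exists>d. good_stage D b \<epsilon> M F d"
proof -
  obtain \<eta> where "0 < \<eta>" and \<eta>: "\<And>z. z \<in> S \<Longrightarrow> dist z x < \<eta> \<Longrightarrow> \<bar>F z\<bar> < \<epsilon>"
    using assms(1,2,5) x_in unfolding continuous_on_iff by (metis dist_real_def diff_zero)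
  define r where "r = nat \<lceil>D / b\<rceil> + 1"
  obtain m where m: "M + r < m" "dist (fwd m) x < min \<epsilon> \<eta>"
    using fwd_recurrent[of "min \<epsilon> \<eta>" "M + r"] \<open>0 < \<eta>\<close> assms(5) by auto
  define Q where "Q = fwd ` {..<m} \<union> bwd ` {1..m}"
  obtain \<delta> where "0 < \<delta>" and sep: "\<And>q q'. q \<in> Q \<Longrightarrow> q' \<in> Q \<Longrightarrow> q \<noteq> q' \<Longrightarrow> \<delta> \<le> dist q q'"
    using finite_imp_uniformly_discrete[of Q] by (auto simp: Q_def)
  define d where "d = Stage (D / r) (fwd ` {M<..M+r}) \<delta> m"
  have "0 < r" "D / b \<le> r"
    unfolding r_def by linarith+
  have visits_d: "\<And>i. i \<le> M \<Longrightarrow> visits d (fwd i) = 0" "visits d (fwd m) = real r"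
    unfolding d_def using visits_marked_block[OF m(1) \<open>0 < r\<close> \<open>0 < \<delta>\<close> sep Q_def] by auto
  have "D / r \<le> b"
    using \<open>D / b \<le> r\<close> \<open>0 < r\<close> \<open>0 < b\<close> by (simp add: field_simps)
  then have "good_stage D b \<epsilon> M F d"
    using assms(3) \<open>0 < r\<close> \<open>0 < \<delta>\<close> m visits_d \<eta>[OF fwd_in]
    by (simp add: good_stage_def d_def)
  then show ?thesis ..
qed

definition choose_stage :: "nat \<Rightarrow> nat \<Rightarrow> ('a \<Rightarrow> real) \<Rightarrow> 'a stage" where
  "choose_stage k M F = (SOME d. good_stage (target k) ((1/2)^k) (tol k) M F d)"

(* history k = (return time of stage k - 1, sum of the weighted visits of the stages < k) *)
primrec history :: "nat \<Rightarrow> nat \<times> ('a \<Rightarrow> real)" where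
  "history 0 = (0, \<lambda>_. 0)"
| "history (Suc k) =
    (let d = choose_stage k (fst (history k)) (snd (history k))
     in (return_time d, \<lambda>z. snd (history k) z + weight d * visits d z))"

definition stages :: "nat \<Rightarrow> 'a stage" where
  "stages k = choose_stage k (fst (history k)) (snd (history k))"

declare history.simps(2)[simp del]

lemma history_Suc:
  "history (Suc k) =
    (return_time (stages k), \<lambda>z. snd (history k) z + weight (stages k) * visits (stages k) z)"
  by (simp add: stages_def Let_def history.simps(2))

lemma snd_history: "snd (history k) z = (\<Sum>j<k. weight (stages j) * visits (stages j) z)"
  by (induction k) (simp_all add: history_Suc)

lemma good_stage_stages_if:
  assumes "continuous_on S (snd (history k))" "snd (history k) x = 0"
  shows "good_stage (target k) ((1/2)^k) (tol k) (fst (history k)) (snd (history k)) (stages k)"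
  unfolding stages_def choose_stage_def
  using good_stage_exists[OF assms target_nonneg _ tol_pos] by (rule someI_ex) simp

lemma history_continuous_vanishing:
  "continuous_on S (snd (history k)) \<and> snd (history k) x = 0"
proof (induction k)
  case (Suc k)
  then have "visits (stages k) x = 0"
    using good_stage_stages_if[of k] fwd_0 unfolding good_stage_def by (metis le0)
  with Suc show ?case
    by (auto simp: history_Suc intro!: continuous_intros continuous_on_visits)
qed (simp add: continuous_on_const)

lemma good_stage_stages:
  "good_stage (target k) ((1/2)^k) (tol k) (fst (history k)) (snd (history k)) (stages k)"
  using history_continuous_vanishing by (blast intro: good_stage_stages_if)

lemma return_time_le_history: "k < k' \<Longrightarrow> return_time (stages k) \<le> fst (history k')"
proof (induction k')
  case (Suc k')
  then show ?case
    using good_stage_stages[of k'] unfolding good_stage_def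
    by (cases "k = k'") (auto simp: history_Suc)
qed simp

lemma visits_later_stage: "k < k' \<Longrightarrow> visits (stages k') (fwd (return_time (stages k))) = 0"
  using good_stage_stages[of k'] return_time_le_history[of k k'] unfolding good_stage_def by blast

definition cocycle_term :: "nat \<Rightarrow> 'a \<Rightarrow> real" where
  "cocycle_term k z = weight (stages k) * (visits (stages k) (h z) - visits (stages k) z)"

definition cocycle :: "'a \<Rightarrow> real" where
  "cocycle z = (\<Sum>k. cocycle_term k z)"

lemma cocycle_term_bound:
  assumes "z \<in> S"
  shows "norm (cocycle_term k z) \<le> (1/2)^k"
proof -
  have "0 \<le> weight (stages k)" "weight (stages k) \<le> (1/2)^k" "0 < radius (stages k)"
    using good_stage_stages[of k] unfolding good_stage_def by auto
  moreover from this
  have "weight (stages k) * \<bar>visits (stages k) (h z) - visits (stages k) z\<bar> \<le> weight (stages k)"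
    using mult_left_mono[OF abs_visits_h_diff_le[OF assms]] by fastforce
  ultimately show ?thesis
    by (simp add: cocycle_term_def abs_mult)
qed

lemma continuous_on_cocycle: "continuous_on S cocycle"
proof -
  have "uniform_limit S (\<lambda>n z. \<Sum>k<n. cocycle_term k z) cocycle sequentially"
    unfolding cocycle_def[abs_def] using cocycle_term_bound
    by (intro Weierstrass_m_test[OF _ summable_geometric[of "1/2"]]) auto
  moreover have "continuous_on S (\<lambda>z. \<Sum>k<n. cocycle_term k z)" for n
    unfolding cocycle_term_def
    by (intro continuous_intros continuous_on_visits
        continuous_on_compose2[OF continuous_on_visits continuous_on_h]) (auto intro: h_in)
  ultimately show ?thesis
    by (intro uniform_limit_theorem) auto
qed

lemma birkhoff_sum_cocycle:
  "(\<lambda>k. weight (stages k) * visits (stages k) (fwd n)) sums (\<Sum>j<n. cocycle (fwd j))"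
proof -
  have summable: "summable (\<lambda>k. cocycle_term k z)" if "z \<in> S" for z
    using cocycle_term_bound[OF that]
    by (intro summable_comparison_test[OF _ summable_geometric[of "1/2"]]) auto
  have "visits (stages k) x = 0" for k
    using good_stage_stages[of k] fwd_0 unfolding good_stage_def by (metis le0)
  then have "(\<Sum>j<n. cocycle_term k (fwd j)) = weight (stages k) * visits (stages k) (fwd n)" for k
    using sum_lessThan_telescope[of "\<lambda>j. visits (stages k) (fwd j)" n]
    by (simp add: cocycle_term_def fwd_Suc[symmetric] sum_distrib_left[symmetric])
  moreover have "(\<lambda>k. \<Sum>j<n. cocycle_term k (fwd j)) sums (\<Sum>j<n. cocycle (fwd j))"
    unfolding cocycle_def using summable fwd_in by (intro sums_sum summable_sums) auto
  ultimately show ?thesis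
    by simp
qed

lemma birkhoff_sum_cocycle_nonneg: "0 \<le> (\<Sum>j<n. cocycle (fwd j))"
  using birkhoff_sum_cocycle[of n] visits_nonneg good_stage_stages unfolding good_stage_def
  by (metis (no_types, lifting) mult_nonneg_nonneg sums_le sums_zero)

lemma birkhoff_sum_cocycle_at_return:
  "(\<Sum>j<return_time (stages k). cocycle (fwd j)) =
    snd (history k) (fwd (return_time (stages k))) + target k"
proof -
  let ?m = "return_time (stages k)"
  have "(\<lambda>j. weight (stages j) * visits (stages j) (fwd ?m)) sums
      (\<Sum>j<Suc k. weight (stages j) * visits (stages j) (fwd ?m))"
    using visits_later_stage[of k] by (intro sums_finite) auto
  moreover have "weight (stages k) * visits (stages k) (fwd ?m) = target k"
    using good_stage_stages[of k] unfolding good_stage_def by blast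
  ultimately show ?thesis
    using birkhoff_sum_cocycle[of ?m] sums_unique2 by (fastforce simp: snd_history)
qed

lemma birkhoff_sum_cocycle_approx:
  assumes "0 \<le> D" "0 < \<epsilon>"
  shows "\<exists>m>0. dist (fwd m) x < \<epsilon> \<and> \<bar>(\<Sum>j<m. cocycle (fwd j)) - D\<bar> < \<epsilon>"
proof -
  obtain k where k: "\<bar>target k - D\<bar> \<le> tol k" "tol k < \<epsilon> / 2"
    using target_approx[OF assms(1), of "\<epsilon> / 2"] assms(2) by auto
  let ?m = "return_time (stages k)"
  have "0 < ?m" "dist (fwd ?m) x < tol k" "\<bar>snd (history k) (fwd ?m)\<bar> < tol k"
    using good_stage_stages[of k] unfolding good_stage_def by auto
  then show ?thesis
    using k birkhoff_sum_cocycle_at_return[of k] by (intro exI[of _ ?m]) auto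
qed

end

section \<open>The fence of the skew product\<close>

locale skew_product = transitive_homeomorphism +
  fixes f :: "'a \<Rightarrow> real"
  assumes continuous_f: "continuous_on S f"
    and birkhoff_nonneg: "\<And>n. 0 \<le> (\<Sum>j<n. f (fwd j))"
    and birkhoff_approx: "\<And>D \<epsilon>. 0 \<le> D \<Longrightarrow> 0 < \<epsilon> \<Longrightarrow>
      \<exists>m>0. dist (fwd m) x < \<epsilon> \<and> \<bar>(\<Sum>j<m. f (fwd j)) - D\<bar> < \<epsilon>"
begin

definition birkhoff :: "nat \<Rightarrow> real" where
  "birkhoff n = (\<Sum>j<n. f (fwd j))"

definition skew :: "'a \<times> real \<Rightarrow> 'a \<times> real" where
  "skew p = (h (fst p), exp (- f (fst p)) * snd p)"

definition skew_inv :: "'a \<times> real \<Rightarrow> 'a \<times> real" where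
  "skew_inv p = (g (fst p), exp (f (g (fst p))) * snd p)"

definition Orb :: "('a \<times> real) set" where
  "Orb = orbit skew (x, 1)"

definition K :: "('a \<times> real) set" where
  "K = closure Orb \<inter> S \<times> UNIV"

lemma funpow_skew: "(skew ^^ n) (x, t) = (fwd n, t * exp (- birkhoff n))"
  by (induction n) (simp_all add: skew_def birkhoff_def fwd_Suc exp_add[symmetric] algebra_simps)

lemma homeomorphism_skew: "homeomorphism (S \<times> UNIV) (S \<times> UNIV) skew skew_inv"
proof (rule homeomorphismI)
  show "continuous_on (S \<times> UNIV) skew"
    unfolding skew_def
    by (intro continuous_intros continuous_on_compose2[OF continuous_on_h]
        continuous_on_compose2[OF continuous_f]) auto
  show "continuous_on (S \<times> UNIV) skew_inv"
    unfolding skew_inv_def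
    by (intro continuous_intros continuous_on_compose2[OF continuous_on_g]
        continuous_on_compose2[OF continuous_f continuous_on_compose2[OF continuous_on_g]])
      (auto intro: g_in)
qed (auto simp: skew_def skew_inv_def h_in g_in g_h h_g exp_minus field_simps)

lemma Orb_eq: "Orb = range (\<lambda>n. (fwd n, exp (- birkhoff n)))"
  by (simp add: Orb_def orbit_def funpow_skew)

lemma Orb_subset: "Orb \<subseteq> S \<times> {0..1}"
  using birkhoff_nonneg fwd_in by (auto simp: Orb_eq birkhoff_def)

lemma Orb_insert: "Orb = insert (x, 1) (skew ` Orb)"
  unfolding Orb_def by (rule orbit_eq_insert)

lemma skew_Orb_subset: "skew ` Orb \<subseteq> Orb"
  by (metis Orb_insert subset_insertI)

lemma exp_birkhoff_in_closure:
  assumes "0 \<le> D"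
  shows "(x, exp (- D)) \<in> closure (skew ` Orb)"
proof -
  have "\<forall>n. \<exists>k>0. dist (fwd k) x < inverse (real (Suc n)) \<and>
      dist (birkhoff k) D < inverse (real (Suc n))"
    using birkhoff_approx[OF assms] by (simp add: birkhoff_def dist_real_def)
  then obtain m where m: "\<And>n. 0 < m n" "\<And>n. dist (fwd (m n)) x < inverse (real (Suc n))"
    "\<And>n. dist (birkhoff (m n)) D < inverse (real (Suc n))"
    by metis
  have "(\<lambda>n. (fwd (m n), exp (- birkhoff (m n)))) \<longlonglongrightarrow> (x, exp (- D))"
    using m by (intro tendsto_intros LIMSEQ_if_dist_less_inverse_Suc)
  moreover have "(fwd k, exp (- birkhoff k)) \<in> skew ` Orb" if "0 < k" for k
  proof -
    obtain j where "k = Suc j"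
      using \<open>0 < k\<close> gr0_implies_Suc by blast
    then have "(fwd k, exp (- birkhoff k)) = skew ((skew ^^ j) (x, 1))"
      using funpow_skew[of k 1] by simp
    then show ?thesis
      by (simp add: Orb_def orbit_def)
  qed
  ultimately show ?thesis
    unfolding closure_sequential using m(1)
    by (intro exI[of _ "\<lambda>n. (fwd (m n), exp (- birkhoff (m n)))"]) simp
qed

lemma vertical_in_closure:
  assumes "0 \<le> t" "t \<le> 1"
  shows "(x, t) \<in> closure (skew ` Orb)"
proof -
  have "(x, s) \<in> closure (skew ` Orb)" if "0 < s" "s \<le> 1" for s
    using exp_birkhoff_in_closure[of "- ln s"] that by simp
  then have "{0<..1} \<subseteq> (\<lambda>t. (x, t)) -` closure (skew ` Orb)"
    by auto
  moreover have "closed ((\<lambda>t. (x, t)) -` closure (skew ` Orb))"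
    by (intro continuous_closed_vimage) (auto intro: continuous_intros)
  ultimately have "closure {0<..1::real} \<subseteq> (\<lambda>t. (x, t)) -` closure (skew ` Orb)"
    by (rule closure_minimal)
  then show ?thesis
    using assms by auto
qed

lemma skew_K: "skew ` K = K"
  unfolding K_def
proof (rule homeomorphism_closure_invariant[OF homeomorphism_skew])
  show "Orb \<subseteq> S \<times> UNIV" "skew ` Orb \<subseteq> Orb"
    using Orb_subset skew_Orb_subset by blast+
  have "insert (x, 1) (skew ` Orb) \<subseteq> closure (skew ` Orb)"
    by (simp add: vertical_in_closure closure_subset)
  then show "Orb \<subseteq> closure (skew ` Orb)"
    by (simp only: Orb_insert[symmetric])
qed

lemma homeomorphism_K: "homeomorphism K K skew skew_inv"
  by (rule homeomorphism_of_subsets[OF homeomorphism_skew _ _ skew_K]) (auto simp: K_def)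

lemma funpow_skew_in_K: "p \<in> K \<Longrightarrow> (skew ^^ n) p \<in> K"
  by (induction n) (use skew_K in auto)

lemma vertical_in_K: "0 \<le> t \<Longrightarrow> t \<le> 1 \<Longrightarrow> (x, t) \<in> K"
  using vertical_in_closure closure_mono[OF skew_Orb_subset] x_in by (auto simp: K_def)

(* The scaling (z, t) |-> (z, c t) commutes with skew and sends (x, 1) to (x, c) \<in> K. *)
lemma scale_in_K:
  assumes "(z, t) \<in> K" "0 \<le> c" "c \<le> 1"
  shows "(z, c * t) \<in> K"
proof -
  let ?\<sigma> = "\<lambda>p::'a \<times> real. (fst p, c * snd p)"
  have "?\<sigma> ((skew ^^ n) (x, 1)) = (skew ^^ n) (x, c)" for n
    by (simp add: funpow_skew)
  then have "?\<sigma> ` Orb \<subseteq> closure Orb"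
    using funpow_skew_in_K[OF vertical_in_K[OF assms(2,3)]] by (auto simp: Orb_def orbit_def K_def)
  then have "?\<sigma> ` closure Orb \<subseteq> closure Orb"
    by (intro image_closure_subset continuous_intros) auto
  then show ?thesis
    using assms(1) by (force simp: K_def)
qed

lemma zero_in_closure:
  assumes "z \<in> S"
  shows "(z, 0) \<in> closure Orb"
proof -
  have "(fwd n, exp (- birkhoff n)) \<in> K" for n
    using fwd_in closure_subset by (fastforce simp: K_def Orb_eq)
  then have "(\<lambda>y. (y, 0::real)) ` range fwd \<subseteq> closure Orb"
    using scale_in_K[of _ _ 0] by (auto simp: K_def)
  then have "(\<lambda>y. (y, 0::real)) ` closure (range fwd) \<subseteq> closure Orb"
    by (intro image_closure_subset continuous_intros) auto
  then show ?thesis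
    using assms dense_orbit range_fwd by auto
qed

lemma closure_Orb_subset: "closure Orb \<subseteq> UNIV \<times> {0..1}"
  using Orb_subset by (intro closure_minimal) (auto simp: closed_Times)

definition phiU :: "'a \<Rightarrow> real" where
  "phiU z = Sup {t. (z, t) \<in> closure Orb}"

lemma
  assumes "z \<in> S"
  shows phiU_in_closure: "(z, phiU z) \<in> closure Orb"
    and le_phiU: "(z, t) \<in> closure Orb \<Longrightarrow> t \<le> phiU z"
    and phiU_nonneg: "0 \<le> phiU z"
    and phiU_le_one: "phiU z \<le> 1"
proof -
  let ?F = "{t. (z, t) \<in> closure Orb}"
  have "closed (Pair z -` closure Orb)"
    by (intro continuous_closed_vimage) (auto intro: continuous_intros)
  then have "closed ?F"
    by (simp add: vimage_def)
  have "0 \<in> ?F"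
    using zero_in_closure[OF assms] by simp
  have bdd: "bdd_above ?F"
    using closure_Orb_subset by (auto intro!: bdd_aboveI[of _ 1])
  show "(z, phiU z) \<in> closure Orb"
    unfolding phiU_def using closed_contains_Sup[OF _ bdd \<open>closed ?F\<close>] \<open>0 \<in> ?F\<close> by blast
  show "(z, t) \<in> closure Orb \<Longrightarrow> t \<le> phiU z"
    unfolding phiU_def using bdd by (auto intro: cSup_upper)
  show "0 \<le> phiU z"
    unfolding phiU_def using bdd \<open>0 \<in> ?F\<close> by (auto intro: cSup_upper)
  show "phiU z \<le> 1"
    using \<open>(z, phiU z) \<in> closure Orb\<close> closure_Orb_subset by auto
qed

lemma K_eq: "K = {(z, t). z \<in> S \<and> 0 \<le> t \<and> t \<le> phiU z}"
proof (intro set_eqI iffI)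
  fix p assume "p \<in> K"
  then show "p \<in> {(z, t). z \<in> S \<and> 0 \<le> t \<and> t \<le> phiU z}"
    using closure_Orb_subset le_phiU by (force simp: K_def)
next
  fix p assume "p \<in> {(z, t). z \<in> S \<and> 0 \<le> t \<and> t \<le> phiU z}"
  then obtain z t where p: "p = (z, t)" "z \<in> S" "0 \<le> t" "t \<le> phiU z"
    by blast
  have top: "(z, phiU z) \<in> K"
    using phiU_in_closure[OF p(2)] p(2) by (simp add: K_def)
  show "p \<in> K"
  proof (cases "phiU z = 0")
    case True
    then show ?thesis using top p by simp
  next
    case False
    then have "0 < phiU z"
      using phiU_nonneg[OF p(2)] by simp
    then have "t = (t / phiU z) * phiU z" "t / phiU z \<le> 1"
      using p(4) by (auto simp: field_simps)
    then show ?thesis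
      using scale_in_K[OF top, of "t / phiU z"] p by simp
  qed
qed

lemma openin_phiU_less: "openin (top_of_set S) {z \<in> S. phiU z < a}"
  unfolding openin_subopen[of _ "{z \<in> S. phiU z < a}"]
proof
  fix z assume z: "z \<in> {z \<in> S. phiU z < a}"
  have "{z} \<times> {a..1} \<subseteq> - closure Orb"
    using z le_phiU by fastforce
  then obtain U where "z \<in> U" "open U" and U: "U \<times> {a..1} \<subseteq> - closure Orb"
    using Elementary_Topology.tube_lemma[of "{a..1}" "- closure Orb" z] by auto
  have "S \<inter> U \<subseteq> {z \<in> S. phiU z < a}"
  proof
    fix y assume "y \<in> S \<inter> U"
    then show "y \<in> {z \<in> S. phiU z < a}"
      using U phiU_in_closure[of y] phiU_le_one[of y] by (force simp: not_less)
  qed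
  then show "\<exists>T. openin (top_of_set S) T \<and> z \<in> T \<and> T \<subseteq> {z \<in> S. phiU z < a}"
    using z \<open>z \<in> U\<close> \<open>open U\<close> openin_open_Int by blast
qed

lemma phiU_h:
  assumes "z \<in> S"
  shows "phiU (h z) = exp (- f z) * phiU z"
proof (rule antisym)
  have "(z, phiU z) \<in> K"
    using assms phiU_nonneg[OF assms] by (simp add: K_eq)
  then have "skew (z, phiU z) \<in> K"
    using skew_K by blast
  then show "exp (- f z) * phiU z \<le> phiU (h z)"
    by (simp add: K_eq skew_def)
  have "(h z, phiU (h z)) \<in> K"
    using h_in[OF assms] phiU_nonneg[OF h_in[OF assms]] by (simp add: K_eq)
  then have "(h z, phiU (h z)) \<in> skew ` K"
    by (simp add: skew_K)
  then obtain y t where yt: "(y, t) \<in> K" "h y = h z" "exp (- f y) * t = phiU (h z)"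
    by (auto simp: skew_def)
  then have "y \<in> S" "t \<le> phiU y"
    by (simp_all add: K_eq)
  moreover from this have "y = z"
    using assms yt(2) by (metis g_h)
  ultimately have "t \<le> phiU z" "phiU (h z) = exp (- f z) * t"
    using yt(3) by simp_all
  then show "phiU (h z) \<le> exp (- f z) * phiU z"
    by (simp add: mult_left_mono)
qed

lemma phiU_fwd: "phiU (fwd n) = exp (- birkhoff n)"
proof (induction n)
  case 0
  have "(x, 1) \<in> closure Orb"
    using Orb_insert closure_subset by blast
  then have "phiU x = 1"
    using le_phiU[OF x_in] phiU_le_one[OF x_in] by (meson antisym)
  then show ?case
    by (simp add: birkhoff_def)
next
  case (Suc n)
  then show ?case
    by (simp add: fwd_Suc phiU_h fwd_in birkhoff_def exp_add[symmetric] algebra_simps)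
qed

lemma graph_dense: "K \<subseteq> closure ((\<lambda>z. (z, phiU z)) ` S)"
proof -
  have "Orb \<subseteq> (\<lambda>z. (z, phiU z)) ` S"
    using fwd_in by (auto simp: Orb_eq phiU_fwd)
  then show ?thesis
    unfolding K_def using closure_mono by blast
qed

lemma phiU_pos_dense: "S \<subseteq> closure {z \<in> S. 0 < phiU z}"
proof -
  have "closure (orbit h x) \<subseteq> closure {z \<in> S. 0 < phiU z}"
    unfolding range_fwd[symmetric] by (rule closure_mono) (use fwd_in in \<open>auto simp: phiU_fwd\<close>)
  then show ?thesis
    using dense_orbit by blast
qed

lemma K_subset_closure_orbit: "K \<subseteq> closure (orbit skew (x, phiU x))"
  using phiU_fwd[of 0] by (simp add: K_def Orb_def birkhoff_def)

end

section \<open>The Lelek fence over the Cantor set\<close>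

lemma infinite_cantor_set: "infinite cantor_set"
proof -
  define p where "p n = (2::real) / 3 ^ (n + 1)" for n :: nat
  have "p n \<in> cantor_set" for n
  proof -
    define d where "d i = (if i = n then 2 else 0::nat)" for i
    have "(\<lambda>i. real (d i) / 3 ^ (i + 1)) = (\<lambda>i. if i = n then p n else 0)"
      by (auto simp: d_def p_def)
    then have "(\<lambda>i. real (d i) / 3 ^ (i + 1)) sums p n"
      using sums_single[of n "\<lambda>_. p n"] by simp
    then show ?thesis
      unfolding cantor_set_def by (auto simp: d_def sums_iff intro!: exI[of _ d])
  qed
  moreover have "inj p"
    by (auto simp: inj_def p_def)
  ultimately show ?thesis
    using infinite_UNIV_nat by (metis finite_imageD finite_subset image_subsetI)
qed

lemma fence_zero:
  assumes "\<forall>z\<in>cantor_set. \<phi> z \<le> 1"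
  shows "fence (\<lambda>_. 0) \<phi> = {(z, t). z \<in> cantor_set \<and> 0 \<le> t \<and> t \<le> \<phi> z}"
  using assms by (force simp: fence_def)

lemma admissible_pair_zero:
  assumes "\<forall>z\<in>cantor_set. 0 \<le> \<phi> z \<and> \<phi> z \<le> 1" "usc_on cantor_set \<phi>"
  shows "admissible_pair (\<lambda>_. 0) \<phi>"
proof -
  have "openin (top_of_set cantor_set) {z \<in> cantor_set. a < (0::real)}" for a
    by (cases "a < 0") auto
  then show ?thesis
    using assms by (simp add: admissible_pair_def lsc_on_def)
qed

theorem theorem7p1:
  fixes h :: "real \<Rightarrow> real" and x :: real
  assumes "\<exists>g. homeomorphism cantor_set cantor_set h g"
    and "top_transitive cantor_set h"
    and "x \<in> cantor_set"
    and "cantor_set \<subseteq> closure (orbit h x)"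
  shows "\<exists>phiL phiU hh. admissible_pair phiL phiU \<and> lelek_fence phiL phiU \<and>
           (\<exists>gg. homeomorphism (fence phiL phiU) (fence phiL phiU) hh gg) \<and>
           (\<forall>p\<in>fence phiL phiU. fst (hh p) = h (fst p)) \<and>
           fence phiL phiU \<subseteq> closure (orbit hh (x, phiU x))"
proof -
  obtain g where "homeomorphism cantor_set cantor_set h g"
    using assms(1) by blast
  then interpret transitive_homeomorphism cantor_set h g x
    using assms(2-4) infinite_cantor_set by unfold_locales
  interpret skew_product cantor_set h g x cocycle
    using continuous_on_cocycle birkhoff_sum_cocycle_nonneg birkhoff_sum_cocycle_approx
    by unfold_locales blast+
  have fence: "fence (\<lambda>_. 0) phiU = K"
    using phiU_le_one by (simp add: fence_zero K_eq)
  have "admissible_pair (\<lambda>_. 0) phiU"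
    using phiU_nonneg phiU_le_one openin_phiU_less
    by (intro admissible_pair_zero) (auto simp: usc_on_def)
  moreover have "lelek_fence (\<lambda>_. 0) phiU"
    unfolding lelek_fence_def fence using graph_dense phiU_pos_dense
    by (intro conjI exI[of _ "{z \<in> cantor_set. 0 < phiU z}"]) auto
  moreover have "\<forall>p\<in>K. fst (skew p) = h (fst p)"
    by (simp add: skew_def)
  ultimately show ?thesis
    using homeomorphism_K K_subset_closure_orbit
    by (intro exI[of _ "\<lambda>_. 0"] exI[of _ phiU] exI[of _ skew]) (auto simp: fence)
qed

end
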